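(* Let $\mathcal{X}$ be any set and $\mathcal{H}\subseteq\{0,1\}^{\mathcal{X}}$. (i) If $\mathcal{H}$ does not have an infinite Littlestone tree, then there is a strategy for the learner in the online learning game that makes only finitely many mistakes against any adversary. (ii) If $\mathcal{H}$ has an infinite Littlestone tree, then there is a strategy for the adversary that forces any learner to make a mistake in every round. In particular, $\mathcal{H}$ is online learnable if and only if it has no infinite Littlestone tree.
   Context: Online learning game: in each round $t\ge1$, the adversary chooses $x_t\in\mathcal{X}$, the learner predicts $\hat y_t\in\{0,1\}$, and the adversary reveals $y_t\in\{0,1\}$, subject to the constraint that for every $T$ there is $h\in\mathcal{H}$ with $h(x_t)=y_t$ for all $t\le T$ (the sequence is realizable). The learner makes a mistake in round $t$ if $\hat y_t\ne y_t$. A learner strategy is a rule $\hat y_t=\hat y_t(x_1,y_1,\ldots,x_{t-1},y_{t-1},x_t)$. $\mathcal{H}$ is online learnable if some learner strategy makes only finitely many mistakes on every realizable sequence $\{(x_t,y_t)\}_{t\ge1}$. Littlestone tree of depth $d\le\infty$: a collection $\{x_{\mathbf u}:0\le k<d,\ \mathbf u\in\{0,1\}^k\}\subseteq\mathcal{X}$ such that for every $\mathbf y\in\{0,1\}^d$ and every $n<d$ there is $h\in\mathcal{H}$ with $h(x_{\mathbf y_{\le k}})=y_{k+1}$ for $0\le k\le n$, where $\mathbf y_{\le k}=(y_1,\ldots,y_k)$. Infinite Littlestone tree: depth $d=\infty$. *)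

theory Defs
  imports Main
begin

(* Labels {0,1} are rendered as bool; hypotheses h : X -> {0,1} as 'x => bool.
   A history is the list of past rounds (x_s, y_s). *)

type_synonym 'x learner = "('x \<times> bool) list \<Rightarrow> 'x \<Rightarrow> bool"

definition realizable :: "('x \<Rightarrow> bool) set \<Rightarrow> (nat \<Rightarrow> 'x \<times> bool) \<Rightarrow> bool" where
  "realizable H s \<longleftrightarrow> (\<forall>T. \<exists>h\<in>H. \<forall>t<T. h (fst (s t)) = snd (s t))"

definition mistake_rounds :: "'x learner \<Rightarrow> (nat \<Rightarrow> 'x \<times> bool) \<Rightarrow> nat set" where
  "mistake_rounds L s = {t. L (map s [0..<t]) (fst (s t)) \<noteq> snd (s t)}"

definition online_learnable :: "('x \<Rightarrow> bool) set \<Rightarrow> bool" where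
  "online_learnable H \<longleftrightarrow>
     (\<exists>L :: 'x learner. \<forall>s. realizable H s \<longrightarrow> finite (mistake_rounds L s))"

(* Infinite Littlestone tree: nodes x_u indexed by finite bit strings u (lists);
   for every infinite branch y and every n there is h in H with
   h(x_{y_1..y_k}) = y_{k+1} for 0 <= k <= n (0-indexed: y k). *)
definition has_infinite_littlestone_tree :: "('x \<Rightarrow> bool) set \<Rightarrow> bool" where
  "has_infinite_littlestone_tree H \<longleftrightarrow>
     (\<exists>tree :: bool list \<Rightarrow> 'x. \<forall>y :: nat \<Rightarrow> bool. \<forall>n.
        \<exists>h\<in>H. \<forall>k\<le>n. h (tree (map y [0..<k])) = y k)"

(* Adversary strategy: chooses x_t from the history, and then y_t from the history,
   x_t and the learner's prediction. *)
type_synonym 'x adv_x = "('x \<times> bool) list \<Rightarrow> 'x"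
type_synonym 'x adv_y = "('x \<times> bool) list \<Rightarrow> 'x \<Rightarrow> bool \<Rightarrow> bool"

fun play_hist :: "'x learner \<Rightarrow> 'x adv_x \<Rightarrow> 'x adv_y \<Rightarrow> nat \<Rightarrow> ('x \<times> bool) list" where
  "play_hist L ax ay 0 = []"
| "play_hist L ax ay (Suc t) =
     (let hs = play_hist L ax ay t; x = ax hs in hs @ [(x, ay hs x (L hs x))])"

definition play_seq :: "'x learner \<Rightarrow> 'x adv_x \<Rightarrow> 'x adv_y \<Rightarrow> nat \<Rightarrow> 'x \<times> bool" where
  "play_seq L ax ay t = last (play_hist L ax ay (Suc t))"

end

theory Submission
  imports Defs "HOL-Library.Bourbaki_Witt_Fixpoint"
begin

(* Iterate transfinitely, starting from the empty family, the operator that adds every class V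
   which is empty or has, at each point x, a restriction h x = b already present (Bourbaki-Witt
   tower). The stages are totally ordered, so a class V in the tower has a rank: the largest stage
   not containing V. At every x one restriction of V lies in that stage; the learner predicts the
   other label, so each mistake moves the version space to a strictly lower stage, while correct
   rounds only shrink it. Induction over the tower then bounds the mistakes. A class outside the
   tower has, at some x, both restrictions outside it; choosing such points recursively gives an
   infinite Littlestone tree, along which the adversary contradicts every prediction. *)

definition restr_label :: "('x \<Rightarrow> bool) set \<Rightarrow> 'x \<Rightarrow> bool \<Rightarrow> ('x \<Rightarrow> bool) set" where
  "restr_label V x b = {h \<in> V. h x = b}"

definition rank_step :: "('x \<Rightarrow> bool) set set \<Rightarrow> ('x \<Rightarrow> bool) set set" where
  "rank_step S = S \<union> {V. V = {} \<or> (\<forall>x. \<exists>b. restr_label V x b \<in> S)}"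

interpretation rank: bourbaki_witt_fixpoint Sup "{(S, T). S \<subseteq> T}" rank_step
  by (rule bourbaki_witt_fixpoint_complete_latticeI) (auto simp: rank_step_def)

abbreviation stages :: "('x \<Rightarrow> bool) set set set" where
  "stages \<equiv> rank.iterates_above {}"

abbreviation ranked :: "('x \<Rightarrow> bool) set set" where
  "ranked \<equiv> rank.fixp_above {}"

lemma Field_subset_order [simp]: "Field {(S, T). S \<subseteq> (T :: 'a set)} = UNIV"
  by (auto simp: Field_def)

lemma stages_downward_closed:
  assumes "S \<in> stages" "B \<in> S" "A \<subseteq> B"
  shows "A \<in> S"
  using assms
proof (induction arbitrary: A B)
  case base then show ?case by simp
next
  case (step S)
  have sub: "restr_label A x b \<subseteq> restr_label B x b" for x b
    using \<open>A \<subseteq> B\<close> by (auto simp: restr_label_def)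
  from \<open>B \<in> rank_step S\<close> consider "B \<in> S" | "B = {}" | "\<forall>x. \<exists>b. restr_label B x b \<in> S"
    unfolding rank_step_def by blast
  then show ?case
  proof cases
    case 1
    then show ?thesis
      using step.IH[OF 1 \<open>A \<subseteq> B\<close>] by (simp add: rank_step_def)
  next
    case 2
    with \<open>A \<subseteq> B\<close> show ?thesis by (simp add: rank_step_def)
  next
    case 3
    have "\<forall>x. \<exists>b. restr_label A x b \<in> S"
      using 3 step.IH sub by blast
    then show ?thesis by (simp add: rank_step_def)
  qed
next
  case (Sup M)
  then obtain T where "T \<in> M" "B \<in> T" by auto
  then show ?case
    using Sup.IH[OF \<open>T \<in> M\<close>] Sup.prems(2) by blast
qed

lemma stages_comparable:
  assumes "S \<in> stages" "T \<in> stages"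
  shows "T \<subseteq> S \<or> rank_step S \<subseteq> T"
proof -
  have ge: "X \<in> rank.iterates_above Y \<Longrightarrow> Y \<subseteq> X" for X Y
    using rank.iterates_above_ge by fastforce
  from rank.iterates_above_triangle[OF assms] show ?thesis
    using rank.iterates_above_successor[of T S] by (auto dest: ge)
qed

definition stage_below :: "('x \<Rightarrow> bool) set \<Rightarrow> ('x \<Rightarrow> bool) set set" where
  "stage_below V = \<Union>{S \<in> stages. V \<notin> S}"

lemma stage_below_in_stages: "stage_below V \<in> stages"
proof -
  have "{S \<in> stages. V \<notin> S} \<in> Chains {(S, T). S \<subseteq> T}"
    using rank.chain_iterates_above[of "{}"] by (auto intro: in_Chains_subset)
  moreover have "{} \<in> {S \<in> stages. V \<notin> S}" by (auto intro: rank.base)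
  ultimately show ?thesis
    unfolding stage_below_def by (intro rank.Sup) auto
qed

lemma stage_below_eq:
  assumes "S \<in> stages" "V \<in> rank_step S" "V \<notin> S"
  shows "stage_below V = S"
proof
  show "S \<subseteq> stage_below V"
    using assms(1,3) by (auto simp: stage_below_def)
  show "stage_below V \<subseteq> S"
    using stages_comparable[OF assms(1) stage_below_in_stages] assms(2)
    by (auto simp: stage_below_def)
qed

lemma ranked_in_stages: "ranked \<in> stages"
  by (rule rank.fixp_iterates_above)

lemma rank_step_ranked: "rank_step ranked = ranked"
  by (rule rank.fixp_above_unfold[symmetric]) simp

lemma not_ranked_split:
  assumes "V \<notin> ranked"
  shows "V \<noteq> {}" and "\<exists>x. \<forall>b. restr_label V x b \<notin> ranked"
  using assms rank_step_ranked unfolding rank_step_def by blast+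

definition split_point :: "('x \<Rightarrow> bool) set \<Rightarrow> 'x" where
  "split_point V = (SOME x. \<forall>b. restr_label V x b \<notin> ranked)"

fun split_subclass :: "('x \<Rightarrow> bool) set \<Rightarrow> bool list \<Rightarrow> ('x \<Rightarrow> bool) set" where
  "split_subclass V [] = V"
| "split_subclass V (b # u) = split_subclass (restr_label V (split_point V) b) u"

lemma split_subclass_not_ranked: "V \<notin> ranked \<Longrightarrow> split_subclass V u \<notin> ranked"
proof (induction u arbitrary: V)
  case (Cons b u)
  have "\<forall>b. restr_label V (split_point V) b \<notin> ranked"
    unfolding split_point_def by (rule someI_ex[OF not_ranked_split(2)[OF Cons.prems]])
  with Cons.IH show ?case by simp
qed simp

lemma mem_split_subclass:
  "h \<in> split_subclass V u \<Longrightarrow>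
     h \<in> V \<and> (\<forall>k<length u. h (split_point (split_subclass V (take k u))) = u ! k)"
proof (induction u arbitrary: V)
  case (Cons b u)
  from Cons.prems have "h \<in> split_subclass (restr_label V (split_point V) b) u"
    by simp
  from Cons.IH[OF this] have "h \<in> restr_label V (split_point V) b"
    and "\<forall>k<length u. h (split_point (split_subclass (restr_label V (split_point V) b) (take k u))) = u ! k"
    by blast+
  then show ?case
    by (auto simp: restr_label_def less_Suc_eq_0_disj)
qed simp

lemma not_ranked_imp_littlestone_tree:
  assumes "V \<notin> ranked"
  shows "has_infinite_littlestone_tree V"
  unfolding has_infinite_littlestone_tree_def
proof (intro exI allI)
  fix y :: "nat \<Rightarrow> bool" and n
  let ?u = "map y [0..<Suc n]"
  have "split_subclass V ?u \<noteq> {}"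
    using not_ranked_split(1)[OF split_subclass_not_ranked[OF assms]] .
  then obtain h where "h \<in> split_subclass V ?u" by blast
  from mem_split_subclass[OF this]
  have "h \<in> V" and "\<forall>k\<le>n. h (split_point (split_subclass V (map y [0..<k]))) = y k"
    by (auto simp: take_map less_Suc_eq_le min_def simp del: upt_Suc)
  then show "\<exists>h\<in>V. \<forall>k\<le>n. h (split_point (split_subclass V (map y [0..<k]))) = y k"
    by blast
qed

definition version_space :: "('x \<Rightarrow> bool) set \<Rightarrow> ('x \<times> bool) list \<Rightarrow> ('x \<Rightarrow> bool) set" where
  "version_space H hist = {h \<in> H. \<forall>(x, y) \<in> set hist. h x = y}"

definition soa :: "('x \<Rightarrow> bool) set \<Rightarrow> 'x learner" where
  "soa H hist x =
     (let V = version_space H hist in \<not> (SOME b. restr_label V x b \<in> stage_below V))"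

lemma version_space_Nil [simp]: "version_space H [] = H"
  by (simp add: version_space_def)

lemma version_space_Suc:
  "version_space H (map s [0..<Suc t]) =
     restr_label (version_space H (map s [0..<t])) (fst (s t)) (snd (s t))"
  by (auto simp: version_space_def restr_label_def case_prod_beta)

lemma version_space_antimono:
  assumes "t \<le> t'"
  shows "version_space H (map s [0..<t']) \<subseteq> version_space H (map s [0..<t])"
proof -
  have "set (map s [0..<t]) \<subseteq> set (map s [0..<t'])"
    using assms by auto
  then show ?thesis
    unfolding version_space_def by blast
qed

lemma realizable_version_space_nonempty:
  assumes "realizable H s"
  shows "version_space H (map s [0..<t]) \<noteq> {}"
proof -
  from assms obtain h where "h \<in> H" "\<forall>i<t. h (fst (s i)) = snd (s i)"
    unfolding realizable_def by blast
  then have "h \<in> version_space H (map s [0..<t])"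
    by (auto simp: version_space_def)
  then show ?thesis by blast
qed

lemma soa_mistake_enters_stage:
  assumes "realizable H s" "S \<in> stages"
    and "version_space H (map s [0..<t]) \<in> rank_step S"
    and "t \<in> mistake_rounds (soa H) s"
  shows "version_space H (map s [0..<Suc t]) \<in> S"
proof -
  let ?V = "version_space H (map s [0..<t])" and ?x = "fst (s t)"
  have sub: "version_space H (map s [0..<Suc t]) \<subseteq> ?V"
    by (rule version_space_antimono) simp
  show ?thesis
  proof (cases "?V \<in> S")
    case True
    with sub show ?thesis using stages_downward_closed[OF assms(2)] by blast
  next
    case False
    with assms(2,3) have below: "stage_below ?V = S"
      by (rule stage_below_eq)
    have "\<exists>b. restr_label ?V ?x b \<in> S"
      using assms(3) False realizable_version_space_nonempty[OF assms(1)]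
      by (auto simp: rank_step_def)
    then have "restr_label ?V ?x (SOME b. restr_label ?V ?x b \<in> S) \<in> S"
      by (rule someI_ex)
    moreover have "snd (s t) = (SOME b. restr_label ?V ?x b \<in> S)"
      using assms(4) below by (simp add: mistake_rounds_def soa_def Let_def)
    ultimately show ?thesis
      unfolding version_space_Suc by simp
  qed
qed

lemma soa_finite_mistakes_from:
  assumes "realizable H s" "S \<in> stages" "version_space H (map s [0..<t]) \<in> S"
  shows "finite (mistake_rounds (soa H) s \<inter> {t..})"
  using assms(2,3)
proof (induction arbitrary: t)
  case base then show ?case by simp
next
  case (step S)
  let ?M = "mistake_rounds (soa H) s"
  show ?case
  proof (cases "?M \<inter> {t..} = {}")
    case False
    then obtain t' where t': "t' \<in> ?M" "t \<le> t'" by blast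
    have "rank_step S \<in> stages"
      using step.hyps by (rule rank.step)
    then have "version_space H (map s [0..<t']) \<in> rank_step S"
      using step.prems version_space_antimono[OF t'(2)] by (rule stages_downward_closed)
    then have "version_space H (map s [0..<Suc t']) \<in> S"
      using soa_mistake_enters_stage[OF assms(1) step.hyps _ t'(1)] by blast
    then have "finite (?M \<inter> {Suc t'..})" by (rule step.IH)
    moreover have "?M \<inter> {t..} \<subseteq> {..t'} \<union> ?M \<inter> {Suc t'..}" by auto
    ultimately show ?thesis
      using finite_subset by blast
  qed simp
next
  case (Sup M) then show ?case by blast
qed

lemma play_hist_eq_map: "play_hist L ax ay t = map (play_seq L ax ay) [0..<t]"
  by (induction t) (simp_all add: play_seq_def Let_def)

lemma littlestone_tree_adversary:
  assumes "has_infinite_littlestone_tree H"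
  obtains ax :: "'x adv_x" and ay :: "'x adv_y" where
    "\<And>L. realizable H (play_seq L ax ay)"
    "\<And>L t. L (play_hist L ax ay t) (fst (play_seq L ax ay t)) \<noteq> snd (play_seq L ax ay t)"
proof -
  from assms obtain tree :: "bool list \<Rightarrow> 'x" where tree:
    "\<And>y n. \<exists>h\<in>H. \<forall>k\<le>n. h (tree (map y [0..<k])) = y k"
    unfolding has_infinite_littlestone_tree_def by blast
  define ax :: "'x adv_x" where "ax hist = tree (map snd hist)" for hist
  define ay :: "'x adv_y" where "ay hist x p = (\<not> p)" for hist x p
  have round: "play_seq L ax ay t =
      (ax (play_hist L ax ay t), \<not> L (play_hist L ax ay t) (ax (play_hist L ax ay t)))"
    for L t by (simp add: play_seq_def Let_def ay_def)
  have "realizable H (play_seq L ax ay)" for L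
    unfolding realizable_def
  proof
    fix T
    define y where "y = snd \<circ> play_seq L ax ay"
    have node: "fst (play_seq L ax ay t) = tree (map y [0..<t])" for t
      by (simp add: round ax_def play_hist_eq_map y_def)
    obtain h where "h \<in> H" and fit: "\<forall>k\<le>T - 1. h (tree (map y [0..<k])) = y k"
      using tree by blast
    have "h (fst (play_seq L ax ay t)) = snd (play_seq L ax ay t)" if "t < T" for t
      using fit that by (simp add: node y_def)
    with \<open>h \<in> H\<close> show "\<exists>h\<in>H. \<forall>t<T. h (fst (play_seq L ax ay t)) = snd (play_seq L ax ay t)"
      by blast
  qed
  then show thesis
    by (rule that) (simp add: round)
qed

lemma no_littlestone_tree_soa_finite_mistakes:
  assumes "\<not> has_infinite_littlestone_tree H" "realizable H s"
  shows "finite (mistake_rounds (soa H) s)"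
proof -
  have "H \<in> ranked"
    using assms(1) not_ranked_imp_littlestone_tree by blast
  then show ?thesis
    using soa_finite_mistakes_from[OF assms(2) ranked_in_stages, of 0] by simp
qed

lemma littlestone_tree_not_online_learnable:
  fixes H :: "('x \<Rightarrow> bool) set"
  assumes "has_infinite_littlestone_tree H"
  shows "\<not> online_learnable H"
proof
  assume "online_learnable H"
  then obtain L :: "'x learner" where L: "\<And>s. realizable H s \<Longrightarrow> finite (mistake_rounds L s)"
    unfolding online_learnable_def by blast
  obtain ax ay where realizable: "\<And>L. realizable H (play_seq L ax ay)"
    and wrong: "\<And>L t. L (play_hist L ax ay t) (fst (play_seq L ax ay t)) \<noteq> snd (play_seq L ax ay t)"
    using littlestone_tree_adversary[OF assms] by metis
  have "mistake_rounds L (play_seq L ax ay) = UNIV"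
    using wrong[of L] by (simp add: mistake_rounds_def play_hist_eq_map)
  with L[OF realizable[of L]] show False by simp
qed

theorem mainTheorem3:
  fixes H :: "('x \<Rightarrow> bool) set"
  shows "(\<not> has_infinite_littlestone_tree H \<longrightarrow>
           (\<exists>L :: 'x learner. \<forall>s. realizable H s \<longrightarrow> finite (mistake_rounds L s)))
       \<and> (has_infinite_littlestone_tree H \<longrightarrow>
           (\<exists>(ax :: 'x adv_x) (ay :: 'x adv_y). \<forall>L :: 'x learner.
              realizable H (play_seq L ax ay) \<and>
              (\<forall>t. L (play_hist L ax ay t) (fst (play_seq L ax ay t)) \<noteq> snd (play_seq L ax ay t))))
       \<and> (online_learnable H \<longleftrightarrow> \<not> has_infinite_littlestone_tree H)"
proof (intro conjI impI)
  assume "\<not> has_infinite_littlestone_tree H"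
  then show "\<exists>L :: 'x learner. \<forall>s. realizable H s \<longrightarrow> finite (mistake_rounds L s)"
    using no_littlestone_tree_soa_finite_mistakes by blast
next
  assume "has_infinite_littlestone_tree H"
  then obtain ax ay where "\<And>L. realizable H (play_seq L ax ay)"
    and "\<And>L t. L (play_hist L ax ay t) (fst (play_seq L ax ay t)) \<noteq> snd (play_seq L ax ay t)"
    using littlestone_tree_adversary by metis
  then show "\<exists>(ax :: 'x adv_x) (ay :: 'x adv_y). \<forall>L :: 'x learner.
      realizable H (play_seq L ax ay) \<and>
      (\<forall>t. L (play_hist L ax ay t) (fst (play_seq L ax ay t)) \<noteq> snd (play_seq L ax ay t))"
    by blast
next
  show "online_learnable H \<longleftrightarrow> \<not> has_infinite_littlestone_tree H"
    using littlestone_tree_not_online_learnable no_littlestone_tree_soa_finite_mistakes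
    unfolding online_learnable_def by blast
qed

end
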